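(* Let $P$ be a finite poset and $X:P\to\mathcal{P}_{<\infty}$ a diagram of finite posets with transition maps $f_{pq}=X(p\to q)$. Suppose $p$ is a down beat point of $P$ dominated by $q$ (i.e. $q$ is the maximum of $\{r\in P: r<p\}$), and that $f_{qp}^{-1}(U_x)$ is a contractible finite space for every $x\in X_p$. Then $\operatorname{\underline{hocolim}} X$ collapses to $\operatorname{\underline{hocolim}} X|_{P\smallsetminus\{p\}}$. In particular they are weak equivalent.
   Context: $P$ is viewed as a category with a unique arrow $p\to q$ iff $p\le q$; $\mathcal{P}_{<\infty}$ is the category of finite posets and order-preserving maps. $\operatorname{\underline{hocolim}} X$ is the poset on $\coprod_{p}X_p$ keeping the order within each $X_p$ and, for $x\in X_p$, $y\in X_q$, $p\le q$, setting $x\le y$ iff $f_{pq}(x)\le y$ in $X_q$; $X|_{P\smallsetminus\{p\}}$ is the restricted diagram. For $x$ in a finite poset $Y$: $U_x=\{y\le x\}$, $\hat U_x=U_x\smallsetminus\{x\}$, $\hat F_x=\{y>x\}$. $x$ is an up beat point if $\hat F_x$ has a minimum, a down beat point if $\hat U_x$ has a maximum. A finite poset is contractible (dismantlable) if it can be reduced to one point by removing beat points one at a time. $x$ is a down (resp. up) weak point if $\hat U_x$ (resp. $\hat F_x$) is contractible; removing a weak point is an elementary collapse, and $Y$ collapses to $Z$ if $Z$ is obtained from $Y$ by a sequence of elementary collapses. Two finite posets are weak equivalent if their order complexes are homotopy equivalent. *)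

theory Defs
  imports "HOL-Analysis.Analysis"
begin

definition finite_poset :: "'a set \<Rightarrow> ('a \<Rightarrow> 'a \<Rightarrow> bool) \<Rightarrow> bool" where
  "finite_poset S le \<longleftrightarrow> finite S \<and> (\<forall>x\<in>S. le x x)
     \<and> (\<forall>x\<in>S. \<forall>y\<in>S. le x y \<and> le y x \<longrightarrow> x = y)
     \<and> (\<forall>x\<in>S. \<forall>y\<in>S. \<forall>z\<in>S. le x y \<and> le y z \<longrightarrow> le x z)"

definition less_in :: "('a \<Rightarrow> 'a \<Rightarrow> bool) \<Rightarrow> 'a \<Rightarrow> 'a \<Rightarrow> bool" where
  "less_in le x y \<longleftrightarrow> le x y \<and> x \<noteq> y"

definition down_hat :: "'a set \<Rightarrow> ('a \<Rightarrow> 'a \<Rightarrow> bool) \<Rightarrow> 'a \<Rightarrow> 'a set" where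
  "down_hat Y le x = {y\<in>Y. less_in le y x}"

definition up_hat :: "'a set \<Rightarrow> ('a \<Rightarrow> 'a \<Rightarrow> bool) \<Rightarrow> 'a \<Rightarrow> 'a set" where
  "up_hat Y le x = {y\<in>Y. less_in le x y}"

definition is_max_of :: "'a set \<Rightarrow> ('a \<Rightarrow> 'a \<Rightarrow> bool) \<Rightarrow> 'a \<Rightarrow> bool" where
  "is_max_of A le m \<longleftrightarrow> m \<in> A \<and> (\<forall>a\<in>A. le a m)"

definition is_min_of :: "'a set \<Rightarrow> ('a \<Rightarrow> 'a \<Rightarrow> bool) \<Rightarrow> 'a \<Rightarrow> bool" where
  "is_min_of A le m \<longleftrightarrow> m \<in> A \<and> (\<forall>a\<in>A. le m a)"

definition up_beat_point :: "'a set \<Rightarrow> ('a \<Rightarrow> 'a \<Rightarrow> bool) \<Rightarrow> 'a \<Rightarrow> bool" where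
  "up_beat_point Y le x \<longleftrightarrow> x \<in> Y \<and> (\<exists>m. is_min_of (up_hat Y le x) le m)"

definition down_beat_point :: "'a set \<Rightarrow> ('a \<Rightarrow> 'a \<Rightarrow> bool) \<Rightarrow> 'a \<Rightarrow> bool" where
  "down_beat_point Y le x \<longleftrightarrow> x \<in> Y \<and> (\<exists>m. is_max_of (down_hat Y le x) le m)"

definition beat_point :: "'a set \<Rightarrow> ('a \<Rightarrow> 'a \<Rightarrow> bool) \<Rightarrow> 'a \<Rightarrow> bool" where
  "beat_point Y le x \<longleftrightarrow> up_beat_point Y le x \<or> down_beat_point Y le x"

inductive contractible_fs :: "('a \<Rightarrow> 'a \<Rightarrow> bool) \<Rightarrow> 'a set \<Rightarrow> bool" for le where
  single: "contractible_fs le {a}"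
| remove: "beat_point Y le x \<Longrightarrow> contractible_fs le (Y - {x}) \<Longrightarrow> contractible_fs le Y"

definition down_weak_point :: "'a set \<Rightarrow> ('a \<Rightarrow> 'a \<Rightarrow> bool) \<Rightarrow> 'a \<Rightarrow> bool" where
  "down_weak_point Y le x \<longleftrightarrow> x \<in> Y \<and> contractible_fs le (down_hat Y le x)"

definition up_weak_point :: "'a set \<Rightarrow> ('a \<Rightarrow> 'a \<Rightarrow> bool) \<Rightarrow> 'a \<Rightarrow> bool" where
  "up_weak_point Y le x \<longleftrightarrow> x \<in> Y \<and> contractible_fs le (up_hat Y le x)"

definition weak_point :: "'a set \<Rightarrow> ('a \<Rightarrow> 'a \<Rightarrow> bool) \<Rightarrow> 'a \<Rightarrow> bool" where
  "weak_point Y le x \<longleftrightarrow> down_weak_point Y le x \<or> up_weak_point Y le x"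

inductive collapses :: "('a \<Rightarrow> 'a \<Rightarrow> bool) \<Rightarrow> 'a set \<Rightarrow> 'a set \<Rightarrow> bool" for le where
  refl: "collapses le Y Y"
| step: "weak_point Y le x \<Longrightarrow> collapses le (Y - {x}) Z \<Longrightarrow> collapses le Y Z"

text \<open>Geometric realization of the order complex of a finite poset (S, le):
  points are convex combinations of vertices of S whose support is a chain,
  with the topology inherited from the product topology on 'a => real.\<close>
definition order_complex_space :: "'a set \<Rightarrow> ('a \<Rightarrow> 'a \<Rightarrow> bool) \<Rightarrow> ('a \<Rightarrow> real) topology" where
  "order_complex_space S le = subtopology euclidean
     {t. (\<forall>v. 0 \<le> t v) \<and> (\<forall>v. v \<notin> S \<longrightarrow> t v = 0) \<and> sum t S = 1
         \<and> (\<forall>a\<in>{v\<in>S. t v \<noteq> 0}. \<forall>b\<in>{v\<in>S. t v \<noteq> 0}. le a b \<or> le b a)}"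

definition weak_equivalent ::
  "'a set \<Rightarrow> ('a \<Rightarrow> 'a \<Rightarrow> bool) \<Rightarrow> 'b set \<Rightarrow> ('b \<Rightarrow> 'b \<Rightarrow> bool) \<Rightarrow> bool" where
  "weak_equivalent S le T le' \<longleftrightarrow>
     order_complex_space S le homotopy_equivalent_space order_complex_space T le'"

definition poset_diagram ::
  "'p set \<Rightarrow> ('p \<Rightarrow> 'p \<Rightarrow> bool) \<Rightarrow> ('p \<Rightarrow> 'x set) \<Rightarrow> ('p \<Rightarrow> 'x \<Rightarrow> 'x \<Rightarrow> bool)
    \<Rightarrow> ('p \<Rightarrow> 'p \<Rightarrow> 'x \<Rightarrow> 'x) \<Rightarrow> bool" where
  "poset_diagram P leP X leX f \<longleftrightarrow>
     (\<forall>p\<in>P. finite_poset (X p) (leX p))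
   \<and> (\<forall>p\<in>P. \<forall>q\<in>P. leP p q \<longrightarrow> (\<forall>x\<in>X p. f p q x \<in> X q))
   \<and> (\<forall>p\<in>P. \<forall>q\<in>P. leP p q \<longrightarrow> (\<forall>x\<in>X p. \<forall>y\<in>X p. leX p x y \<longrightarrow> leX q (f p q x) (f p q y)))
   \<and> (\<forall>p\<in>P. \<forall>x\<in>X p. f p p x = x)
   \<and> (\<forall>p\<in>P. \<forall>q\<in>P. \<forall>r\<in>P. leP p q \<and> leP q r \<longrightarrow> (\<forall>x\<in>X p. f q r (f p q x) = f p r x))"

definition hocolim_set :: "'p set \<Rightarrow> ('p \<Rightarrow> 'x set) \<Rightarrow> ('p \<times> 'x) set" where
  "hocolim_set P X = {(p, x). p \<in> P \<and> x \<in> X p}"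

definition hocolim_le ::
  "('p \<Rightarrow> 'p \<Rightarrow> bool) \<Rightarrow> ('p \<Rightarrow> 'x \<Rightarrow> 'x \<Rightarrow> bool) \<Rightarrow> ('p \<Rightarrow> 'p \<Rightarrow> 'x \<Rightarrow> 'x)
    \<Rightarrow> 'p \<times> 'x \<Rightarrow> 'p \<times> 'x \<Rightarrow> bool" where
  "hocolim_le leP leX f a b \<longleftrightarrow> leP (fst a) (fst b) \<and> leX (fst b) (f (fst a) (fst b) (snd a)) (snd b)"

end

theory Submission
  imports Defs
begin

(*
  The points (p, x) of the fibre over p are removed one at a time, in increasing order of x. When
  (p, x) is removed, the points below it are the (r, y) with r < p and f_rp y <= x. All these r lie
  below q, so (r, y) |-> (q, f_rq y) is a closure operator on this set, and its image is a copy of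
  f_qp^-1(U_x), which is contractible. A closure operator whose image is contractible has a
  contractible domain, because a maximal point outside the image is an up beat point; hence (p, x)
  is a down weak point.

  Removing a weak point x does not change the homotopy type of the order complex. This is seen on the
  flag complex of the comparability graph: following a dismantling of the points below x, the edges
  at x are deleted one by one until x has a single neighbour, which dominates it. Each deletion is a
  straight-line deformation retraction of the geometric realization, moving weight from the two ends
  of the deleted edge (resp. from the deleted vertex) onto a dominating vertex.
*)

lemma finite_poset_subset: "finite_poset S le \<Longrightarrow> Y \<subseteq> S \<Longrightarrow> finite_poset Y le"
  unfolding finite_poset_def by (meson finite_subset subsetD)

lemma finite_poset_converse: "finite_poset S le \<Longrightarrow> finite_poset S (\<lambda>a b. le b a)"
  unfolding finite_poset_def by blast

lemma finite_posetD:
  assumes "finite_poset S le"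
  shows "finite S" "x \<in> S \<Longrightarrow> le x x"
    "x \<in> S \<Longrightarrow> y \<in> S \<Longrightarrow> le x y \<Longrightarrow> le y x \<Longrightarrow> x = y"
    "x \<in> S \<Longrightarrow> y \<in> S \<Longrightarrow> z \<in> S \<Longrightarrow> le x y \<Longrightarrow> le y z \<Longrightarrow> le x z"
  using assms unfolding finite_poset_def by blast+

lemma finite_poset_ex_maximal_minimal:
  assumes "finite_poset S le" "M \<subseteq> S" "M \<noteq> {}"
  shows finite_poset_ex_maximal: "\<exists>m\<in>M. \<forall>x\<in>M. \<not> less_in le m x"
    and finite_poset_ex_minimal: "\<exists>m\<in>M. \<forall>x\<in>M. \<not> less_in le x m"
proof -
  have fin: "finite M"
    using assms(1,2) finite_subset unfolding finite_poset_def by blast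
  have asym: "asymp_on M (less_in le)"
    using assms by (smt (verit, best) asymp_onI finite_poset_def less_in_def subset_iff)
  have trans: "transp_on M (less_in le)"
    using assms by (smt (verit, best) finite_poset_def less_in_def subset_iff transp_onI)
  have irrefl: "\<not> less_in le x x" for x
    by (simp add: less_in_def)
  show "\<exists>m\<in>M. \<forall>x\<in>M. \<not> less_in le m x"
    using Finite_Set.bex_max_element[OF fin asym trans \<open>M \<noteq> {}\<close>] irrefl by metis
  show "\<exists>m\<in>M. \<forall>x\<in>M. \<not> less_in le x m"
    using Finite_Set.bex_min_element[OF fin asym trans \<open>M \<noteq> {}\<close>] irrefl by metis
qed

lemma down_beat_point_iff_up_converse:
  "down_beat_point Y le x \<longleftrightarrow> up_beat_point Y (\<lambda>a b. le b a) x"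
  unfolding up_beat_point_def down_beat_point_def up_hat_def down_hat_def
    is_min_of_def is_max_of_def less_in_def
  by auto

lemma beat_point_converse: "beat_point Y le x \<Longrightarrow> beat_point Y (\<lambda>a b. le b a) x"
  unfolding beat_point_def using down_beat_point_iff_up_converse[of Y "\<lambda>a b. le b a"]
  by (auto simp: down_beat_point_iff_up_converse)

lemma contractible_fs_converse: "contractible_fs le Y \<Longrightarrow> contractible_fs (\<lambda>a b. le b a) Y"
  by (induction rule: contractible_fs.induct)
    (auto intro: contractible_fs.intros beat_point_converse)

lemma up_beat_point_dominated:
  assumes "finite_poset S le" "Z \<subseteq> S" "up_beat_point Z le b"
  obtains m where "m \<in> Z" "m \<noteq> b" "le b m"
    "\<forall>z\<in>Z. le b z \<or> le z b \<longrightarrow> le m z \<or> le z m"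
proof -
  obtain m where "is_min_of (up_hat Z le b) le m"
    using assms(3) by (auto simp: up_beat_point_def)
  then have m: "m \<in> Z" "le b m" "b \<noteq> m"
    and m_least: "\<And>z. z \<in> Z \<Longrightarrow> le b z \<Longrightarrow> b \<noteq> z \<Longrightarrow> le m z"
    by (auto simp: is_min_of_def up_hat_def less_in_def)
  have "b \<in> Z" using assms(3) by (simp add: up_beat_point_def)
  show thesis
  proof (rule that[OF m(1) m(3)[symmetric] m(2)], intro ballI impI)
    fix z assume z: "z \<in> Z" "le b z \<or> le z b"
    show "le m z \<or> le z m"
    proof (cases "z = b")
      case False
      have "le z m" if "le z b"
        using finite_posetD(4)[OF assms(1), of z b m] that z(1) m(1,2) \<open>b \<in> Z\<close> assms(2) by blast
      then show ?thesis
        using z m_least[of z] False by blast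
    qed (use m in simp)
  qed
qed

lemma beat_point_dominated:
  assumes "finite_poset S le" "Z \<subseteq> S" "beat_point Z le b"
  obtains m where "m \<in> Z" "m \<noteq> b" "le m b \<or> le b m"
    "\<forall>z\<in>Z. le b z \<or> le z b \<longrightarrow> le m z \<or> le z m"
proof (cases "up_beat_point Z le b")
  case True
  with up_beat_point_dominated[OF assms(1,2)] show thesis
    using that by metis
next
  case False
  then have "up_beat_point Z (\<lambda>x y. le y x) b"
    using assms(3) by (simp add: beat_point_def down_beat_point_iff_up_converse)
  with up_beat_point_dominated[OF finite_poset_converse[OF assms(1)] assms(2)] show thesis
    using that by metis
qed

lemma is_max_of_iff_is_min_of_converse:
  "is_max_of A le m \<longleftrightarrow> is_min_of A (\<lambda>a b. le b a) m"
  by (simp add: is_max_of_def is_min_of_def)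

lemma is_min_of_image:
  assumes "is_min_of A le m" "A \<subseteq> B" "\<And>a b. a \<in> B \<Longrightarrow> b \<in> B \<Longrightarrow> le' (g a) (g b) \<longleftrightarrow> le a b"
  shows "is_min_of (g ` A) le' (g m)"
  using assms unfolding is_min_of_def by (auto simp: subset_iff)

lemma contractible_fs_image:
  assumes "contractible_fs le B" "inj_on g B" "\<And>a b. a \<in> B \<Longrightarrow> b \<in> B \<Longrightarrow> le' (g a) (g b) \<longleftrightarrow> le a b"
  shows "contractible_fs le' (g ` B)"
  using assms
proof (induction rule: contractible_fs.induct)
  case (single a)
  then show ?case by (simp add: contractible_fs.single)
next
  case (remove Y x)
  have "x \<in> Y"
    using remove(1) by (auto simp: beat_point_def up_beat_point_def down_beat_point_def)
  have image_Y: "g ` (Y - {x}) = g ` Y - {g x}"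
    using remove.prems(1) \<open>x \<in> Y\<close> by (auto simp: inj_on_def)
  have "contractible_fs le' (g ` (Y - {x}))"
    using remove.prems by (intro remove.IH) (auto simp: inj_on_def)
  moreover have "beat_point (g ` Y) le' (g x)"
  proof -
    have up_image: "up_hat (g ` Y) le' (g x) = g ` up_hat Y le x"
      and down_image: "down_hat (g ` Y) le' (g x) = g ` down_hat Y le x"
      using remove.prems \<open>x \<in> Y\<close> unfolding up_hat_def down_hat_def less_in_def inj_on_def by auto
    have up_sub: "up_hat Y le x \<subseteq> Y" and down_sub: "down_hat Y le x \<subseteq> Y"
      by (auto simp: up_hat_def down_hat_def)
    consider "up_beat_point Y le x" | "down_beat_point Y le x"
      using remove(1) unfolding beat_point_def by blast
    then show ?thesis
    proof cases
      case 1
      then obtain m where "is_min_of (up_hat Y le x) le m"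
        by (auto simp: up_beat_point_def)
      then have "is_min_of (up_hat (g ` Y) le' (g x)) le' (g m)"
        unfolding up_image using up_sub remove.prems(2) by (rule is_min_of_image)
      then show ?thesis
        using \<open>x \<in> Y\<close> by (auto simp: beat_point_def up_beat_point_def)
    next
      case 2
      then obtain m where "is_min_of (down_hat Y le x) (\<lambda>a b. le b a) m"
        by (auto simp: down_beat_point_def is_max_of_iff_is_min_of_converse)
      then have "is_min_of (down_hat (g ` Y) le' (g x)) (\<lambda>a b. le' b a) (g m)"
        unfolding down_image using down_sub remove.prems(2) by (rule is_min_of_image)
      then show ?thesis
        using \<open>x \<in> Y\<close>
        by (auto simp: beat_point_def down_beat_point_def is_max_of_iff_is_min_of_converse)
    qed
  qed
  ultimately show ?case
    using image_Y by (metis contractible_fs.remove)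
qed

definition closure_operator_on :: "'a set \<Rightarrow> ('a \<Rightarrow> 'a \<Rightarrow> bool) \<Rightarrow> ('a \<Rightarrow> 'a) \<Rightarrow> bool" where
  "closure_operator_on A le c \<longleftrightarrow> c ` A \<subseteq> A \<and> (\<forall>a\<in>A. le a (c a))
     \<and> (\<forall>a\<in>A. \<forall>b\<in>A. le a b \<longrightarrow> le (c a) (c b)) \<and> (\<forall>a\<in>A. c (c a) = c a)"

lemma closure_operator_on_remove:
  assumes "closure_operator_on A le c" "a \<in> A" "a \<notin> c ` A"
  shows "c ` (A - {a}) = c ` A" "closure_operator_on (A - {a}) le c"
proof -
  have "c a \<in> A" "c (c a) = c a"
    using assms(1,2) unfolding closure_operator_on_def by blast+
  moreover have "c a \<noteq> a"
    using assms(2,3) by (metis image_eqI)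
  ultimately have "c a \<in> c ` (A - {a})"
    by (metis Diff_iff image_eqI singletonD)
  then show image_eq: "c ` (A - {a}) = c ` A"
    by (auto simp: image_iff)
  show "closure_operator_on (A - {a}) le c"
    using assms unfolding closure_operator_on_def image_eq by blast
qed

lemma closure_operator_onD:
  assumes "closure_operator_on A le c" "a \<in> A"
  shows "c a \<in> A" "le a (c a)" "c (c a) = c a" "b \<in> A \<Longrightarrow> le a b \<Longrightarrow> le (c a) (c b)"
  using assms unfolding closure_operator_on_def by blast+

lemma up_beat_point_if_closure_operator:
  assumes closure: "closure_operator_on A le c" and "a \<in> A" "a \<notin> c ` A"
    and maximal: "\<forall>x\<in>A - c ` A. \<not> less_in le a x"
  shows "up_beat_point A le a"
proof -
  have "is_min_of (up_hat A le a) le (c a)"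
    unfolding is_min_of_def up_hat_def less_in_def
  proof (intro conjI ballI CollectI)
    show "c a \<in> A" "le a (c a)"
      using closure_operator_onD[OF closure \<open>a \<in> A\<close>] by simp_all
    show "a \<noteq> c a"
      using \<open>a \<in> A\<close> \<open>a \<notin> c ` A\<close> by (metis image_eqI)
  next
    fix b assume b: "b \<in> {y \<in> A. le a y \<and> a \<noteq> y}"
    then have "b \<in> c ` A"
      using maximal by (auto simp: less_in_def)
    then have "c b = b"
      using closure_operator_onD(3)[OF closure] by auto
    then show "le (c a) b"
      using closure_operator_onD(4)[OF closure \<open>a \<in> A\<close>, of b] b by simp
  qed
  then show ?thesis
    using \<open>a \<in> A\<close> by (auto simp: up_beat_point_def)
qed

lemma contractible_fs_if_closure_operator:
  assumes "finite_poset A le" "closure_operator_on A le c" "contractible_fs le (c ` A)"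
  shows "contractible_fs le A"
proof -
  have "contractible_fs le A'"
    if "finite D" "A' - c ` A' = D" "A' \<subseteq> A" "closure_operator_on A' le c" "c ` A' = c ` A" for D A'
    using that
  proof (induction D arbitrary: A' rule: finite_remove_induct)
    case empty
    have "c ` A' \<subseteq> A'"
      using empty.prems(3) by (simp add: closure_operator_on_def)
    with empty.prems(1) have "A' = c ` A'"
      by blast
    with empty.prems(4) assms(3) show ?case
      by simp
  next
    case (remove D A')
    have "D \<subseteq> A"
      using remove.prems(1,2) by blast
    then obtain a where a: "a \<in> D" and maximal: "\<forall>x\<in>D. \<not> less_in le a x"
      using finite_poset_ex_maximal[OF assms(1) _ remove.hyps(2)] by blast
    have "a \<in> A'" "a \<notin> c ` A'"
      using a remove.prems(1) by auto
    note remove_a = closure_operator_on_remove[OF remove.prems(3) this]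
    have "up_beat_point A' le a"
      using up_beat_point_if_closure_operator[OF remove.prems(3) \<open>a \<in> A'\<close> \<open>a \<notin> c ` A'\<close>]
        maximal remove.prems(1) by blast
    moreover have "contractible_fs le (A' - {a})"
    proof (rule remove.IH[OF a])
      show "A' - {a} - c ` (A' - {a}) = D - {a}"
        using remove_a(1) remove.prems(1) by blast
      show "A' - {a} \<subseteq> A"
        using remove.prems(2) by blast
      show "c ` (A' - {a}) = c ` A"
        using remove_a(1) remove.prems(4) by simp
    qed (fact remove_a(2))
    ultimately show ?case
      by (meson beat_point_def contractible_fs.remove)
  qed
  moreover have "finite (A - c ` A)"
    using finite_posetD(1)[OF assms(1)] by simp
  ultimately show ?thesis
    using assms(2) by blast
qed

lemma homotopy_equivalent_space_straight_line_retract: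
  fixes T T' :: "('a \<Rightarrow> real) set"
  assumes "T' \<subseteq> T" and r_cont: "continuous_on T r" and "r ` T \<subseteq> T'"
    and "\<And>t. t \<in> T' \<Longrightarrow> r t = t"
    and segment: "\<And>s t. s \<in> {0..1} \<Longrightarrow> t \<in> T \<Longrightarrow> (\<lambda>k. s * t k + (1 - s) * r t k) \<in> T"
  shows "top_of_set T homotopy_equivalent_space top_of_set T'"
proof (rule deformation_retract_imp_homotopy_equivalent_space)
  let ?h = "\<lambda>z::real \<times> ('a \<Rightarrow> real). \<lambda>k. fst z * snd z k + (1 - fst z) * r (snd z) k"
  have r_snd: "continuous_on ({0..1} \<times> T) (\<lambda>z. r (snd z))"
    by (rule continuous_on_compose2[OF r_cont]) (auto intro: continuous_intros)
  have "continuous_on ({0..1} \<times> T) ?h"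
  proof (rule continuous_on_coordinatewise_then_product)
    fix k
    have "continuous_on ({0..1} \<times> T) (\<lambda>z::real \<times> ('a \<Rightarrow> real). snd z k)"
      by (rule continuous_on_product_then_coordinatewise) (auto intro: continuous_intros)
    moreover have "continuous_on ({0..1} \<times> T) (\<lambda>z. r (snd z) k)"
      by (rule continuous_on_product_then_coordinatewise[OF r_snd])
    ultimately show "continuous_on ({0..1} \<times> T) (\<lambda>z. ?h z k)"
      by (intro continuous_intros)
  qed
  moreover have "?h \<in> {0..1} \<times> T \<rightarrow> T" using segment by auto
  ultimately show "homotopic_with (\<lambda>x. True) (top_of_set T) (top_of_set T) r id"
    unfolding homotopic_with_def by (intro exI[of _ ?h]) auto
  show "retraction_maps (top_of_set T) (top_of_set T') r id"
    unfolding retraction_maps_def using assms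
    by (auto simp: continuous_on_id continuous_map_in_subtopology)
qed

(* The geometric realization of the clique complex of the graph adj on S, in the coordinates used by
   order_complex_space. *)
definition flag_complex :: "'a set \<Rightarrow> ('a \<Rightarrow> 'a \<Rightarrow> bool) \<Rightarrow> ('a \<Rightarrow> real) set" where
  "flag_complex S adj = {t. (\<forall>v. 0 \<le> t v) \<and> (\<forall>v. v \<notin> S \<longrightarrow> t v = 0) \<and> sum t S = 1
     \<and> (\<forall>a\<in>{v\<in>S. t v \<noteq> 0}. \<forall>b\<in>{v\<in>S. t v \<noteq> 0}. adj a b)}"

lemma flag_complex_memI:
  assumes "\<And>k. 0 \<le> t k" "\<And>k. k \<notin> S \<Longrightarrow> t k = 0" "sum t S = 1"
    and "\<And>a b. a \<in> S \<Longrightarrow> b \<in> S \<Longrightarrow> t a \<noteq> 0 \<Longrightarrow> t b \<noteq> 0 \<Longrightarrow> adj a b"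
  shows "t \<in> flag_complex S adj"
  using assms unfolding flag_complex_def by blast

lemma flag_complex_memD:
  assumes "t \<in> flag_complex S adj"
  shows "0 \<le> t k" "k \<notin> S \<Longrightarrow> t k = 0" "sum t S = 1"
    and "a \<in> S \<Longrightarrow> b \<in> S \<Longrightarrow> t a \<noteq> 0 \<Longrightarrow> t b \<noteq> 0 \<Longrightarrow> adj a b"
  using assms unfolding flag_complex_def by blast+

lemma flag_complex_mono:
  "(\<And>a b. a \<in> S \<Longrightarrow> b \<in> S \<Longrightarrow> adj' a b \<Longrightarrow> adj a b) \<Longrightarrow> flag_complex S adj' \<subseteq> flag_complex S adj"
  by (blast intro: flag_complex_memI dest: flag_complex_memD)

lemma flag_complex_cong:
  "(\<And>a b. a \<in> S \<Longrightarrow> b \<in> S \<Longrightarrow> adj a b \<longleftrightarrow> adj' a b) \<Longrightarrow> flag_complex S adj = flag_complex S adj'"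
  by (metis flag_complex_mono subset_antisym)

lemma continuous_on_coordinates:
  "continuous_on T (\<lambda>t. t i)"
  by (rule continuous_on_subset[OF continuous_on_product_coordinates]) simp

lemma continuous_on_add_scaled:
  "continuous_on T g \<Longrightarrow> continuous_on T (\<lambda>t::'a \<Rightarrow> real. \<lambda>k. t k + c k * g t)"
  by (intro continuous_on_coordinatewise_then_product continuous_intros continuous_on_coordinates)

lemma homotopy_equivalent_flag_complex_retract:
  assumes "T' \<subseteq> flag_complex S adj" and "continuous_on (flag_complex S adj) r"
    and r_into: "r ` flag_complex S adj \<subseteq> T'" and "\<And>t. t \<in> T' \<Longrightarrow> r t = t"
    and clique: "\<And>t a b. t \<in> flag_complex S adj \<Longrightarrow> a \<in> S \<Longrightarrow> b \<in> S
       \<Longrightarrow> t a \<noteq> 0 \<or> r t a \<noteq> 0 \<Longrightarrow> t b \<noteq> 0 \<or> r t b \<noteq> 0 \<Longrightarrow> adj a b"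
  shows "top_of_set (flag_complex S adj) homotopy_equivalent_space top_of_set T'"
  using assms(1,2,3,4)
proof (rule homotopy_equivalent_space_straight_line_retract)
  fix s :: real and t assume s: "s \<in> {0..1}" and t: "t \<in> flag_complex S adj"
  have rt: "r t \<in> flag_complex S adj" using t r_into assms(1) by blast
  show "(\<lambda>k. s * t k + (1 - s) * r t k) \<in> flag_complex S adj"
  proof (rule flag_complex_memI)
    show "0 \<le> s * t k + (1 - s) * r t k" for k
      using s flag_complex_memD(1)[OF t] flag_complex_memD(1)[OF rt] by simp
    show "s * t k + (1 - s) * r t k = 0" if "k \<notin> S" for k
      using flag_complex_memD(2)[OF t that] flag_complex_memD(2)[OF rt that] by simp
    show "(\<Sum>k\<in>S. s * t k + (1 - s) * r t k) = 1"
      using flag_complex_memD(3)[OF t] flag_complex_memD(3)[OF rt]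
      by (simp add: sum.distrib flip: sum_distrib_left)
    show "adj a b" if "a \<in> S" "b \<in> S" "s * t a + (1 - s) * r t a \<noteq> 0"
      "s * t b + (1 - s) * r t b \<noteq> 0" for a b
      using clique[OF t that(1,2)] that(3,4) by fastforce
  qed
qed

lemma flag_complex_delete_dominated_vertex:
  assumes "finite S" "symp adj" "v \<in> S" "a \<in> S" "a \<noteq> v" "adj v a"
    and dominated: "\<And>y. y \<in> S \<Longrightarrow> adj v y \<Longrightarrow> y = v \<or> adj a y"
  shows "top_of_set (flag_complex S adj) homotopy_equivalent_space
         top_of_set (flag_complex (S - {v}) adj)"
proof -
  \<comment> \<open>r moves the weight of v onto a.\<close>
  define r where "r = (\<lambda>t :: 'a \<Rightarrow> real. \<lambda>k. t k + (of_bool (k = a) - of_bool (k = v)) * t v)"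
  have sum_S_v: "sum g (S - {v}) = sum g S - g v" for g :: "'a \<Rightarrow> real"
    using assms by (simp add: sum_diff1)
  have clique: "adj x y"
    if t: "t \<in> flag_complex S adj" and "x \<in> S" "y \<in> S"
      and "t x \<noteq> 0 \<or> r t x \<noteq> 0" "t y \<noteq> 0 \<or> r t y \<noteq> 0" for t x y
  proof -
    note t_clique = flag_complex_memD(4)[OF t]
    have a_adj: "adj a z" if "z \<in> S" "t z \<noteq> 0" "t v \<noteq> 0" for z
      using dominated[OF \<open>z \<in> S\<close> t_clique[OF \<open>v \<in> S\<close> that(1) that(3,2)]]
        \<open>adj v a\<close> \<open>symp adj\<close> by (auto dest: sympD)
    have a_refl: "adj a a"
      using dominated[OF \<open>a \<in> S\<close> \<open>adj v a\<close>] \<open>a \<noteq> v\<close> by blast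
    have "t z \<noteq> 0 \<or> z = a \<and> t v \<noteq> 0" if "t z \<noteq> 0 \<or> r t z \<noteq> 0" for z
      using that by (cases "z = a"; cases "z = v") (auto simp: r_def)
    then show ?thesis
      using that t_clique a_adj a_refl \<open>symp adj\<close> by (metis sympD)
  qed
  show ?thesis
  proof (rule homotopy_equivalent_flag_complex_retract[where r = r])
    show "flag_complex (S - {v}) adj \<subseteq> flag_complex S adj"
    proof
      fix t assume t: "t \<in> flag_complex (S - {v}) adj"
      have "t v = 0" using flag_complex_memD(2)[OF t] by simp
      then show "t \<in> flag_complex S adj"
        using flag_complex_memD[OF t] by (intro flag_complex_memI) (auto simp: sum_S_v)
    qed
    show "continuous_on (flag_complex S adj) r"
      unfolding r_def by (intro continuous_on_add_scaled continuous_intros continuous_on_coordinates)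
    show "r t = t" if "t \<in> flag_complex (S - {v}) adj" for t
    proof -
      have "t v = 0" using flag_complex_memD(2)[OF that] by simp
      then show ?thesis by (simp add: r_def)
    qed
    show "r ` flag_complex S adj \<subseteq> flag_complex (S - {v}) adj"
    proof (rule image_subsetI, rule flag_complex_memI)
      fix t k assume t: "t \<in> flag_complex S adj"
      show "0 \<le> r t k"
        using flag_complex_memD(1)[OF t, of k] flag_complex_memD(1)[OF t, of v] \<open>a \<noteq> v\<close>
        by (cases "k = a"; cases "k = v") (simp_all add: r_def)
      show "r t k = 0" if "k \<notin> S - {v}"
      proof (cases "k = v")
        case False
        then show ?thesis
          using flag_complex_memD(2)[OF t, of k] that \<open>a \<in> S\<close> by (auto simp: r_def)
      qed (use \<open>a \<noteq> v\<close> in \<open>simp add: r_def\<close>)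
      have "sum (r t) S = sum t S"
        using assms by (simp add: r_def sum.distrib sum_subtractf Int_absorb1 flip: sum_distrib_right)
      moreover have "r t v = 0"
        using \<open>a \<noteq> v\<close> by (simp add: r_def)
      ultimately show "sum (r t) (S - {v}) = 1"
        using flag_complex_memD(3)[OF t] by (simp add: sum_S_v)
      show "adj x y" if "x \<in> S - {v}" "y \<in> S - {v}" "r t x \<noteq> 0" "r t y \<noteq> 0" for x y
        using clique[OF t] that by blast
    qed
  qed (rule clique)
qed

lemma flag_complex_delete_edge:
  assumes "finite S" "symp adj" "u \<in> S" "w \<in> S" "m \<in> S" "u \<noteq> w" "u \<noteq> m" "w \<noteq> m"
    and "adj u m" "adj w m"
    and common: "\<And>y. y \<in> S \<Longrightarrow> adj u y \<Longrightarrow> adj w y \<Longrightarrow> adj m y"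
  shows "top_of_set (flag_complex S adj) homotopy_equivalent_space
         top_of_set (flag_complex S (\<lambda>a b. adj a b \<and> \<not> (a = u \<and> b = w \<or> a = w \<and> b = u)))"
proof -
  let ?adj' = "\<lambda>a b. adj a b \<and> \<not> (a = u \<and> b = w \<or> a = w \<and> b = u)"
  \<comment> \<open>r moves the common weight min (t u) (t w) of u and w onto m, so u or w leaves the support.\<close>
  define r where "r = (\<lambda>t :: 'a \<Rightarrow> real. \<lambda>k.
      t k + (2 * of_bool (k = m) - of_bool (k = u) - of_bool (k = w)) * min (t u) (t w))"
  have clique: "adj x y"
    if t: "t \<in> flag_complex S adj" and "x \<in> S" "y \<in> S"
      and "t x \<noteq> 0 \<or> r t x \<noteq> 0" "t y \<noteq> 0 \<or> r t y \<noteq> 0" for t x y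
  proof -
    note t_clique = flag_complex_memD(4)[OF t]
    have m_adj: "adj m z" if "z \<in> S" "t z \<noteq> 0" "t u \<noteq> 0" "t w \<noteq> 0" for z
      using common t_clique that assms by blast
    have m_refl: "adj m m"
      using common assms by blast
    have "t z \<noteq> 0 \<or> z = m \<and> t u \<noteq> 0 \<and> t w \<noteq> 0" if "t z \<noteq> 0 \<or> r t z \<noteq> 0" for z
      using that flag_complex_memD(1)[OF t, of u] flag_complex_memD(1)[OF t, of w] assms
      by (cases "z = u"; cases "z = w"; cases "z = m") (auto simp: r_def min_def split: if_splits)
    then show ?thesis
      using that t_clique m_adj m_refl \<open>symp adj\<close> by (metis sympD)
  qed
  show ?thesis
  proof (rule homotopy_equivalent_flag_complex_retract[where r = r])
    show "flag_complex S ?adj' \<subseteq> flag_complex S adj"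
      by (rule flag_complex_mono) blast
    show "continuous_on (flag_complex S adj) r"
      unfolding r_def by (intro continuous_on_add_scaled continuous_intros continuous_on_coordinates)
    show "r t = t" if t: "t \<in> flag_complex S ?adj'" for t
    proof -
      have "\<not> (t u \<noteq> 0 \<and> t w \<noteq> 0)"
        using flag_complex_memD(4)[OF t, of u w] assms by blast
      then have "min (t u) (t w) = 0"
        using flag_complex_memD(1)[OF t, of u] flag_complex_memD(1)[OF t, of w] by linarith
      then show ?thesis by (simp add: r_def)
    qed
    show "r ` flag_complex S adj \<subseteq> flag_complex S ?adj'"
    proof (rule image_subsetI, rule flag_complex_memI)
      fix t k assume t: "t \<in> flag_complex S adj"
      note t_nonneg = flag_complex_memD(1)[OF t]
      show "0 \<le> r t k"
        using t_nonneg[of k] t_nonneg[of u] t_nonneg[of w] assms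
        by (cases "k = u"; cases "k = w"; cases "k = m") (auto simp: r_def min_def)
      show "r t k = 0" if "k \<notin> S"
        using flag_complex_memD(2)[OF t that] that assms by (auto simp: r_def)
      show "sum (r t) S = 1"
        using flag_complex_memD(3)[OF t] assms
        by (simp add: r_def sum.distrib sum_subtractf Int_absorb1 flip: sum_distrib_left sum_distrib_right)
      have "r t u = 0 \<or> r t w = 0"
        using assms by (simp add: r_def min_def)
      then show "?adj' x y" if "x \<in> S" "y \<in> S" "r t x \<noteq> 0" "r t y \<noteq> 0" for x y
        using clique[OF t] that by blast
    qed
  qed (rule clique)
qed

definition comparable :: "('a \<Rightarrow> 'a \<Rightarrow> bool) \<Rightarrow> 'a \<Rightarrow> 'a \<Rightarrow> bool" where
  "comparable le a b \<longleftrightarrow> le a b \<or> le b a"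

lemma symp_comparable: "symp (comparable le)"
  by (auto simp: symp_def comparable_def)

lemma order_complex_space_eq_flag_complex_comparable:
  "order_complex_space S le = top_of_set (flag_complex S (comparable le))"
  by (simp add: order_complex_space_def flag_complex_def comparable_def)

lemma order_complex_space_converse:
  "order_complex_space S (\<lambda>a b. le b a) = order_complex_space S le"
  by (simp add: order_complex_space_def disj_commute)

definition restrict_link :: "('a \<Rightarrow> 'a \<Rightarrow> bool) \<Rightarrow> 'a \<Rightarrow> 'a set \<Rightarrow> 'a \<Rightarrow> 'a \<Rightarrow> bool" where
  "restrict_link adj x N a b \<longleftrightarrow> adj a b \<and> (a = x \<longrightarrow> b = x \<or> b \<in> N) \<and> (b = x \<longrightarrow> a = x \<or> a \<in> N)"

lemma symp_restrict_link: "symp adj \<Longrightarrow> symp (restrict_link adj x N)"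
  by (auto simp: symp_def restrict_link_def)

lemma restrict_link_delete_vertex:
  assumes "finite S" "symp adj" "x \<in> S" "a \<in> S" "a \<noteq> x" "adj x a" "adj a a"
  shows "top_of_set (flag_complex S (restrict_link adj x {a})) homotopy_equivalent_space
         top_of_set (flag_complex (S - {x}) adj)"
proof -
  have "top_of_set (flag_complex S (restrict_link adj x {a})) homotopy_equivalent_space
        top_of_set (flag_complex (S - {x}) (restrict_link adj x {a}))"
    using assms by (intro flag_complex_delete_dominated_vertex symp_restrict_link)
      (auto simp: restrict_link_def)
  moreover have "flag_complex (S - {x}) (restrict_link adj x {a}) = flag_complex (S - {x}) adj"
    by (rule flag_complex_cong) (auto simp: restrict_link_def)
  ultimately show ?thesis
    by simp
qed

lemma restrict_link_delete_edge:
  assumes "finite S" "symp adj" "x \<in> S" "y \<in> S" "m \<in> S" "x \<noteq> y" "x \<noteq> m" "y \<noteq> m"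
    and "y \<notin> N" "m \<in> N" "adj x m" "adj y m"
    and common: "\<And>z. z \<in> S \<Longrightarrow> z \<noteq> x \<Longrightarrow> z \<in> insert y N \<Longrightarrow> adj x z \<Longrightarrow> adj y z \<Longrightarrow> adj m z"
  shows "top_of_set (flag_complex S (restrict_link adj x (insert y N))) homotopy_equivalent_space
         top_of_set (flag_complex S (restrict_link adj x N))"
proof -
  let ?adj = "restrict_link adj x (insert y N)"
  have "adj m x"
    using \<open>adj x m\<close> \<open>symp adj\<close> by (simp add: sympD)
  then have "top_of_set (flag_complex S ?adj) homotopy_equivalent_space
        top_of_set (flag_complex S (\<lambda>a b. ?adj a b \<and> \<not> (a = x \<and> b = y \<or> a = y \<and> b = x)))"
    using assms by (intro flag_complex_delete_edge symp_restrict_link)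
      (auto simp: restrict_link_def)
  moreover have "(\<lambda>a b. ?adj a b \<and> \<not> (a = x \<and> b = y \<or> a = y \<and> b = x)) = restrict_link adj x N"
    using \<open>y \<notin> N\<close> \<open>x \<noteq> y\<close> by (auto simp: restrict_link_def fun_eq_iff)
  ultimately show ?thesis
    by simp
qed

lemma restrict_link_delete_up_edges:
  assumes poset: "finite_poset S le" and "x \<in> S" "a \<in> down_hat S le x" "G \<subseteq> up_hat S le x"
  shows "top_of_set (flag_complex S (restrict_link (comparable le) x (insert a G)))
           homotopy_equivalent_space top_of_set (flag_complex (S - {x}) (comparable le))"
proof -
  note le_refl = finite_posetD(2)[OF poset] and le_antisym = finite_posetD(3)[OF poset]
    and le_trans = finite_posetD(4)[OF poset]
  have "finite S"
    using finite_posetD(1)[OF poset] .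
  have a: "a \<in> S" "le a x" "a \<noteq> x"
    using assms(3) by (auto simp: down_hat_def less_in_def)
  have "finite G"
    using assms(4) \<open>finite S\<close> by (auto simp: up_hat_def intro: finite_subset)
  then show ?thesis
    using assms(4)
  proof (induction G rule: finite_induct)
    case empty
    have "comparable le x a" "comparable le a a"
      using a le_refl by (auto simp: comparable_def)
    then show ?case
      using restrict_link_delete_vertex[OF \<open>finite S\<close> symp_comparable \<open>x \<in> S\<close> a(1,3)] by simp
  next
    case (insert y G)
    have y: "y \<in> S" "le x y" "x \<noteq> y"
      using insert.prems by (auto simp: up_hat_def less_in_def)
    have "y \<noteq> a"
      using le_antisym[OF \<open>x \<in> S\<close> a(1)] y a by auto
    have above_x: "le x z" if "z \<in> G" for z
      using insert.prems that by (auto simp: up_hat_def less_in_def)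
    have "top_of_set (flag_complex S (restrict_link (comparable le) x (insert y (insert a G))))
          homotopy_equivalent_space top_of_set (flag_complex S (restrict_link (comparable le) x (insert a G)))"
    proof (rule restrict_link_delete_edge[OF \<open>finite S\<close> symp_comparable \<open>x \<in> S\<close> y(1) a(1)
          y(3) a(3)[symmetric] \<open>y \<noteq> a\<close>])
      show "y \<notin> insert a G" "a \<in> insert a G"
        using \<open>y \<noteq> a\<close> \<open>y \<notin> G\<close> by simp_all
      show "comparable le x a" "comparable le y a"
        using a(2) le_trans[OF a(1) \<open>x \<in> S\<close> y(1) a(2) y(2)] by (simp_all add: comparable_def)
      fix z assume "z \<in> S" "z \<noteq> x" "z \<in> insert y (insert a G)"
      then have "z = a \<or> le x z"
        using above_x y by blast
      then show "comparable le a z"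
        using le_refl[OF a(1)] le_trans[OF a(1) \<open>x \<in> S\<close> \<open>z \<in> S\<close> a(2)] by (auto simp: comparable_def)
    qed
    moreover have "top_of_set (flag_complex S (restrict_link (comparable le) x (insert a G)))
          homotopy_equivalent_space top_of_set (flag_complex (S - {x}) (comparable le))"
      using insert.IH insert.prems by simp
    ultimately show ?case
      by (simp add: insert_commute homotopy_eqv_trans)
  qed
qed

(* The point m dominating the beat point b is a common neighbour of x and b that is adjacent to all
   their other common neighbours, which is what allows deleting the edge between x and b. *)
lemma restrict_link_delete_beat_point:
  assumes poset: "finite_poset S le" and "x \<in> S" "Z \<subseteq> down_hat S le x" "G \<subseteq> up_hat S le x"
    and "beat_point Z le b"
  shows "top_of_set (flag_complex S (restrict_link (comparable le) x (Z \<union> G)))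
           homotopy_equivalent_space
         top_of_set (flag_complex S (restrict_link (comparable le) x ((Z - {b}) \<union> G)))"
proof -
  note le_antisym = finite_posetD(3)[OF poset] and le_trans = finite_posetD(4)[OF poset]
  have "finite S"
    using finite_posetD(1)[OF poset] .
  have Z_below: "z \<in> S" "le z x" "z \<noteq> x" if "z \<in> Z" for z
    using assms(3) that by (auto simp: down_hat_def less_in_def)
  have G_above: "z \<in> S" "le x z" "z \<noteq> x" if "z \<in> G" for z
    using assms(4) that by (auto simp: up_hat_def less_in_def)
  have "b \<in> Z"
    using assms(5) unfolding beat_point_def up_beat_point_def down_beat_point_def by blast
  have "Z \<subseteq> S"
    using Z_below(1) by blast
  obtain m where m: "m \<in> Z" "m \<noteq> b" "le m b \<or> le b m"
    and dominated: "\<forall>z\<in>Z. le b z \<or> le z b \<longrightarrow> le m z \<or> le z m"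
    using beat_point_dominated[OF poset \<open>Z \<subseteq> S\<close> assms(5)] by blast
  have "b \<notin> G"
  proof
    assume "b \<in> G"
    then show False
      using Z_below[OF \<open>b \<in> Z\<close>] G_above(2)[of b] le_antisym[OF \<open>x \<in> S\<close>, of b] by simp
  qed
  have "insert b ((Z - {b}) \<union> G) = Z \<union> G"
    using \<open>b \<in> Z\<close> by blast
  moreover have "top_of_set (flag_complex S (restrict_link (comparable le) x (insert b ((Z - {b}) \<union> G))))
        homotopy_equivalent_space
        top_of_set (flag_complex S (restrict_link (comparable le) x ((Z - {b}) \<union> G)))"
  proof (rule restrict_link_delete_edge[OF \<open>finite S\<close> symp_comparable \<open>x \<in> S\<close>
        Z_below(1)[OF \<open>b \<in> Z\<close>] Z_below(1)[OF m(1)]])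
    show "x \<noteq> b" "x \<noteq> m" "b \<noteq> m"
      using Z_below(3)[OF \<open>b \<in> Z\<close>] Z_below(3)[OF m(1)] m(2) by auto
    show "b \<notin> Z - {b} \<union> G" "m \<in> Z - {b} \<union> G"
      using \<open>b \<notin> G\<close> m(1,2) by auto
    show "comparable le x m" "comparable le b m"
      using Z_below(2)[OF m(1)] m(3) by (auto simp: comparable_def)
    fix z assume z: "z \<in> S" "z \<noteq> x" "z \<in> insert b ((Z - {b}) \<union> G)"
      and "comparable le x z" "comparable le b z"
    show "comparable le m z"
    proof (cases "z \<in> Z")
      case True
      then show ?thesis
        using dominated[rule_format, OF True] \<open>comparable le b z\<close> unfolding comparable_def by blast
    next
      case False
      then have "le x z"
        using z(3) G_above(2) \<open>b \<in> Z\<close> by blast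
      then show ?thesis
        using le_trans[OF Z_below(1)[OF m(1)] \<open>x \<in> S\<close> \<open>z \<in> S\<close> Z_below(2)[OF m(1)]]
        by (simp add: comparable_def)
    qed
  qed
  ultimately show ?thesis
    by simp
qed

lemma homotopy_equivalent_restrict_link_contractible:
  assumes poset: "finite_poset S le" and "x \<in> S" and "contractible_fs le Z"
    and "Z \<subseteq> down_hat S le x" "G \<subseteq> up_hat S le x"
  shows "top_of_set (flag_complex S (restrict_link (comparable le) x (Z \<union> G)))
           homotopy_equivalent_space top_of_set (flag_complex (S - {x}) (comparable le))"
  using assms(3-5)
proof (induction arbitrary: G rule: contractible_fs.induct)
  case (single a)
  then show ?case
    using restrict_link_delete_up_edges[OF poset \<open>x \<in> S\<close>] by simp
next
  case (remove Z b)
  have "top_of_set (flag_complex S (restrict_link (comparable le) x ((Z - {b}) \<union> G)))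
      homotopy_equivalent_space top_of_set (flag_complex (S - {x}) (comparable le))"
    using remove.prems by (intro remove.IH) auto
  then show ?case
    using restrict_link_delete_beat_point[OF poset \<open>x \<in> S\<close> remove.prems remove.hyps(1)]
      homotopy_eqv_trans by blast
qed

lemma order_complex_delete_down_weak_point:
  assumes "finite_poset S le" "x \<in> S" "contractible_fs le (down_hat S le x)"
  shows "order_complex_space S le homotopy_equivalent_space order_complex_space (S - {x}) le"
proof -
  have "flag_complex S (comparable le)
      = flag_complex S (restrict_link (comparable le) x (down_hat S le x \<union> up_hat S le x))"
  proof (rule flag_complex_cong)
    fix a b assume "a \<in> S" "b \<in> S"
    then show "comparable le a b
        \<longleftrightarrow> restrict_link (comparable le) x (down_hat S le x \<union> up_hat S le x) a b"
      unfolding restrict_link_def comparable_def down_hat_def up_hat_def less_in_def by blast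
  qed
  then show ?thesis
    using homotopy_equivalent_restrict_link_contractible[OF assms subset_refl subset_refl]
    by (simp add: order_complex_space_eq_flag_complex_comparable)
qed

lemma order_complex_delete_weak_point:
  assumes "finite_poset S le" "weak_point S le x"
  shows "order_complex_space S le homotopy_equivalent_space order_complex_space (S - {x}) le"
proof -
  have "x \<in> S"
    using assms(2) unfolding weak_point_def down_weak_point_def up_weak_point_def by blast
  show ?thesis
  proof (cases "contractible_fs le (down_hat S le x)")
    case True
    then show ?thesis
      by (rule order_complex_delete_down_weak_point[OF assms(1) \<open>x \<in> S\<close>])
  next
    case False
    then have "contractible_fs le (up_hat S le x)"
      using assms(2) unfolding weak_point_def down_weak_point_def up_weak_point_def by blast
    moreover have "up_hat S le x = down_hat S (\<lambda>a b. le b a) x"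
      by (auto simp: up_hat_def down_hat_def less_in_def)
    ultimately have "contractible_fs (\<lambda>a b. le b a) (down_hat S (\<lambda>a b. le b a) x)"
      using contractible_fs_converse by metis
    then have "order_complex_space S (\<lambda>a b. le b a) homotopy_equivalent_space
        order_complex_space (S - {x}) (\<lambda>a b. le b a)"
      by (rule order_complex_delete_down_weak_point[OF finite_poset_converse[OF assms(1)] \<open>x \<in> S\<close>])
    then show ?thesis
      using order_complex_space_converse[of S le] order_complex_space_converse[of "S - {x}" le]
      by simp
  qed
qed

lemma collapses_homotopy_equivalent:
  assumes "collapses le Y Z" "finite_poset Y le"
  shows "order_complex_space Y le homotopy_equivalent_space order_complex_space Z le"
  using assms
proof (induction rule: collapses.induct)
  case (refl Y)
  show ?case by (rule homotopy_equivalent_space_refl)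
next
  case (step Y x Z)
  have "finite_poset (Y - {x}) le"
    using step.prems by (rule finite_poset_subset) blast
  then show ?case
    using homotopy_eqv_trans[OF order_complex_delete_weak_point[OF step.prems step.hyps(1)]] step.IH
    by blast
qed

lemma poset_diagramD:
  assumes "poset_diagram P leP X leX f"
  shows "r \<in> P \<Longrightarrow> finite_poset (X r) (leX r)"
    "r \<in> P \<Longrightarrow> s \<in> P \<Longrightarrow> leP r s \<Longrightarrow> y \<in> X r \<Longrightarrow> f r s y \<in> X s"
    "r \<in> P \<Longrightarrow> s \<in> P \<Longrightarrow> leP r s \<Longrightarrow> y \<in> X r \<Longrightarrow> z \<in> X r \<Longrightarrow> leX r y z
      \<Longrightarrow> leX s (f r s y) (f r s z)"
    "r \<in> P \<Longrightarrow> y \<in> X r \<Longrightarrow> f r r y = y"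
    "r \<in> P \<Longrightarrow> s \<in> P \<Longrightarrow> t \<in> P \<Longrightarrow> leP r s \<Longrightarrow> leP s t \<Longrightarrow> y \<in> X r
      \<Longrightarrow> f s t (f r s y) = f r t y"
  using assms unfolding poset_diagram_def by blast+

lemma finite_poset_hocolim:
  assumes P: "finite_poset P leP" and diagram: "poset_diagram P leP X leX f"
  shows "finite_poset (hocolim_set P X) (hocolim_le leP leX f)"
  unfolding finite_poset_def
proof (intro conjI ballI impI)
  note fX = poset_diagramD(2)[OF diagram] and fmono = poset_diagramD(3)[OF diagram]
    and fid = poset_diagramD(4)[OF diagram] and fcomp = poset_diagramD(5)[OF diagram]
  note X_poset = finite_posetD[OF poset_diagramD(1)[OF diagram]]
  have "hocolim_set P X = Sigma P X"
    by (auto simp: hocolim_set_def)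
  then show "finite (hocolim_set P X)"
    using finite_posetD(1)[OF P] X_poset(1) by auto
  fix z w v assume z: "z \<in> hocolim_set P X" and w: "w \<in> hocolim_set P X"
  obtain r y where zz: "z = (r, y)" "r \<in> P" "y \<in> X r" using z by (auto simp: hocolim_set_def)
  obtain s u where ww: "w = (s, u)" "s \<in> P" "u \<in> X s" using w by (auto simp: hocolim_set_def)
  show "hocolim_le leP leX f z z"
    using zz finite_posetD(2)[OF P] X_poset(2) fid by (simp add: hocolim_le_def)
  show "z = w" if "hocolim_le leP leX f z w \<and> hocolim_le leP leX f w z"
  proof -
    have "r = s"
      using that zz ww finite_posetD(3)[OF P] by (auto simp: hocolim_le_def)
    then show ?thesis
      using that zz ww X_poset(3) fid by (auto simp: hocolim_le_def)
  qed
  assume v: "v \<in> hocolim_set P X" and zwv: "hocolim_le leP leX f z w \<and> hocolim_le leP leX f w v"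
  obtain t k where vv: "v = (t, k)" "t \<in> P" "k \<in> X t" using v by (auto simp: hocolim_set_def)
  have rs: "leP r s" and st: "leP s t" and l1: "leX s (f r s y) u" and l2: "leX t (f s t u) k"
    using zwv zz ww vv by (auto simp: hocolim_le_def)
  have rt: "leP r t"
    using finite_posetD(4)[OF P zz(2) ww(2) vv(2) rs st] .
  have "leX t (f s t (f r s y)) (f s t u)"
    using fmono[OF ww(2) vv(2) st fX[OF zz(2) ww(2) rs zz(3)] ww(3) l1] .
  then have "leX t (f r t y) (f s t u)"
    using fcomp[OF zz(2) ww(2) vv(2) rs st zz(3)] by simp
  then have "leX t (f r t y) k"
    using X_poset(4)[OF vv(2) fX[OF zz(2) vv(2) rt zz(3)] fX[OF ww(2) vv(2) st ww(3)] vv(3) _ l2]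
    by blast
  then show "hocolim_le leP leX f z v"
    using rt zz vv by (simp add: hocolim_le_def)
qed

context
  fixes P :: "'p set" and leP :: "'p \<Rightarrow> 'p \<Rightarrow> bool"
    and X :: "'p \<Rightarrow> 'x set" and leX :: "'p \<Rightarrow> 'x \<Rightarrow> 'x \<Rightarrow> bool"
    and f :: "'p \<Rightarrow> 'p \<Rightarrow> 'x \<Rightarrow> 'x" and p q :: 'p
  assumes P_poset: "finite_poset P leP" and diagram: "poset_diagram P leP X leX f"
    and p_in_P: "p \<in> P" and q_max: "is_max_of (down_hat P leP p) leP q"
begin

lemma q_below_p: "q \<in> P" "less_in leP q p"
  using q_max by (auto simp: is_max_of_def down_hat_def)

lemma le_q_if_below_p: "r \<in> P \<Longrightarrow> less_in leP r p \<Longrightarrow> leP r q"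
  using q_max by (auto simp: is_max_of_def down_hat_def)

definition below_fibre :: "'x \<Rightarrow> ('p \<times> 'x) set" where
  "below_fibre x = {(r, y). r \<in> P \<and> y \<in> X r \<and> less_in leP r p \<and> leX p (f r p y) x}"

lemma below_fibre_le_q: "(r, y) \<in> below_fibre x \<Longrightarrow> leP r q"
  using le_q_if_below_p by (simp add: below_fibre_def)

lemma project_below_fibre:
  assumes "(r, y) \<in> below_fibre x"
  shows "f r q y \<in> X q" "leX p (f q p (f r q y)) x"
proof -
  have "r \<in> P" "y \<in> X r" "leP q p"
    using assms q_below_p by (auto simp: below_fibre_def less_in_def)
  then show "f r q y \<in> X q" "leX p (f q p (f r q y)) x"
    using assms poset_diagramD(2,5)[OF diagram _ q_below_p(1)] p_in_P below_fibre_le_q[OF assms]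
    by (auto simp: below_fibre_def)
qed

lemma fibre_over_q_below_fibre: "b \<in> X q \<Longrightarrow> leX p (f q p b) x \<Longrightarrow> (q, b) \<in> below_fibre x"
  using q_below_p by (simp add: below_fibre_def)

lemma closure_operator_on_below_fibre:
  "closure_operator_on (below_fibre x) (hocolim_le leP leX f) (\<lambda>(r, y). (q, f r q y))"
proof -
  note fX = poset_diagramD(2)[OF diagram] and fmono = poset_diagramD(3)[OF diagram]
    and fid = poset_diagramD(4)[OF diagram] and fcomp = poset_diagramD(5)[OF diagram]
  note q = q_below_p(1) and P_refl = finite_posetD(2)[OF P_poset]
    and X_refl = finite_posetD(2)[OF poset_diagramD(1)[OF diagram]]
  let ?c = "\<lambda>(r, y). (q, f r q y)" and ?le = "hocolim_le leP leX f"
  have "?c ` below_fibre x \<subseteq> below_fibre x"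
    using project_below_fibre fibre_over_q_below_fibre by auto
  moreover have "?le z (?c z) \<and> ?c (?c z) = ?c z" if "z \<in> below_fibre x" for z
  proof -
    obtain r y where z: "z = (r, y)" "(r, y) \<in> below_fibre x"
      using \<open>z \<in> below_fibre x\<close> by (cases z) simp
    have fy: "f r q y \<in> X q"
      using project_below_fibre(1)[OF z(2)] .
    then show ?thesis
      using below_fibre_le_q[OF z(2)] X_refl[OF q fy] fid[OF q fy] by (simp add: z hocolim_le_def)
  qed
  moreover have "?le (?c z) (?c w)"
    if z_in: "z \<in> below_fibre x" and w_in: "w \<in> below_fibre x" and "?le z w" for z w
  proof -
    obtain r y s u where z: "z = (r, y)" "(r, y) \<in> below_fibre x" "r \<in> P" "y \<in> X r"
      and w: "w = (s, u)" "(s, u) \<in> below_fibre x" "s \<in> P" "u \<in> X s"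
      using z_in w_in by (auto simp: below_fibre_def)
    have rs: "leP r s" and ru: "leX s (f r s y) u"
      using \<open>?le z w\<close> by (simp_all add: z w hocolim_le_def)
    have "leX q (f s q (f r s y)) (f s q u)"
      using fmono[OF w(3) q below_fibre_le_q[OF w(2)] fX[OF z(3) w(3) rs z(4)] w(4) ru] .
    then show ?thesis
      using fcomp[OF z(3) w(3) q rs below_fibre_le_q[OF w(2)] z(4)] P_refl[OF q] fid[OF q]
        project_below_fibre(1)[OF z(2)]
      by (simp add: z w hocolim_le_def)
  qed
  ultimately show ?thesis
    unfolding closure_operator_on_def by blast
qed

lemma image_below_fibre:
  "(\<lambda>(r, y). (q, f r q y)) ` below_fibre x = Pair q ` {y \<in> X q. leX p (f q p y) x}"
proof
  show "(\<lambda>(r, y). (q, f r q y)) ` below_fibre x \<subseteq> Pair q ` {y \<in> X q. leX p (f q p y) x}"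
    using project_below_fibre by auto
  have "(q, b) = (\<lambda>(r, y). (q, f r q y)) (q, b)" if "b \<in> X q" for b
    using that poset_diagramD(4)[OF diagram q_below_p(1)] by simp
  then show "Pair q ` {y \<in> X q. leX p (f q p y) x} \<subseteq> (\<lambda>(r, y). (q, f r q y)) ` below_fibre x"
    using fibre_over_q_below_fibre by blast
qed

lemma contractible_below_fibre:
  assumes "contractible_fs (leX q) {y \<in> X q. leX p (f q p y) x}"
  shows "contractible_fs (hocolim_le leP leX f) (below_fibre x)"
proof (rule contractible_fs_if_closure_operator[OF _ closure_operator_on_below_fibre])
  show "finite_poset (below_fibre x) (hocolim_le leP leX f)"
    by (rule finite_poset_subset[OF finite_poset_hocolim[OF P_poset diagram]])
      (auto simp: below_fibre_def hocolim_set_def)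
  have "contractible_fs (hocolim_le leP leX f) (Pair q ` {y \<in> X q. leX p (f q p y) x})"
  proof (rule contractible_fs_image[OF assms])
    show "hocolim_le leP leX f (q, a) (q, b) \<longleftrightarrow> leX q a b"
      if "a \<in> {y \<in> X q. leX p (f q p y) x}" "b \<in> {y \<in> X q. leX p (f q p y) x}" for a b
      using that finite_posetD(2)[OF P_poset q_below_p(1)] poset_diagramD(4)[OF diagram q_below_p(1)]
      by (simp add: hocolim_le_def)
  qed (simp add: inj_on_def)
  then show "contractible_fs (hocolim_le leP leX f) ((\<lambda>(r, y). (q, f r q y)) ` below_fibre x)"
    by (simp only: image_below_fibre)
qed

lemma down_hat_fibre_point:
  assumes E: "E \<subseteq> X p" "x \<in> E" and minimal: "\<forall>y\<in>E. \<not> less_in (leX p) y x"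
  shows "down_hat {z \<in> hocolim_set P X. fst z \<noteq> p \<or> snd z \<in> E} (hocolim_le leP leX f) (p, x)
    = below_fibre x"
proof (intro set_eqI iffI)
  fix z assume z: "z \<in> down_hat {z \<in> hocolim_set P X. fst z \<noteq> p \<or> snd z \<in> E} (hocolim_le leP leX f) (p, x)"
  obtain r y where "z = (r, y)" by fastforce
  then have ry: "r \<in> P" "y \<in> X r" "r \<noteq> p \<or> y \<in> E" "leP r p" "leX p (f r p y) x" "(r, y) \<noteq> (p, x)"
    using z by (auto simp: down_hat_def hocolim_set_def hocolim_le_def less_in_def)
  have "r \<noteq> p"
  proof
    assume "r = p"
    then show False
      using ry minimal poset_diagramD(4)[OF diagram p_in_P] by (auto simp: less_in_def)
  qed
  then show "z \<in> below_fibre x"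
    using ry \<open>z = (r, y)\<close> by (simp add: below_fibre_def less_in_def)
next
  fix z assume "z \<in> below_fibre x"
  then show "z \<in> down_hat {z \<in> hocolim_set P X. fst z \<noteq> p \<or> snd z \<in> E} (hocolim_le leP leX f) (p, x)"
    by (auto simp: below_fibre_def down_hat_def hocolim_set_def hocolim_le_def less_in_def)
qed

lemma hocolim_collapses_fibre:
  assumes fibres: "\<forall>x\<in>X p. contractible_fs (leX q) {y \<in> X q. leX p (f q p y) x}"
    and "E \<subseteq> X p"
  shows "collapses (hocolim_le leP leX f) {z \<in> hocolim_set P X. fst z \<noteq> p \<or> snd z \<in> E}
    (hocolim_set (P - {p}) X)"
proof -
  have "finite E"
    using finite_posetD(1)[OF poset_diagramD(1)[OF diagram p_in_P]] \<open>E \<subseteq> X p\<close> finite_subset by blast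
  then show ?thesis
    using \<open>E \<subseteq> X p\<close>
  proof (induction E rule: finite_remove_induct)
    case empty
    have "{z \<in> hocolim_set P X. fst z \<noteq> p \<or> snd z \<in> {}} = hocolim_set (P - {p}) X"
      by (auto simp: hocolim_set_def)
    then show ?case
      by (simp add: collapses.refl)
  next
    case (remove E)
    let ?Y = "{z \<in> hocolim_set P X. fst z \<noteq> p \<or> snd z \<in> E}"
    obtain x where x: "x \<in> E" and minimal: "\<forall>y\<in>E. \<not> less_in (leX p) y x"
      using finite_poset_ex_minimal[OF poset_diagramD(1)[OF diagram p_in_P] remove.prems remove.hyps(2)]
      by blast
    have "x \<in> X p"
      using x remove.prems by blast
    have weak: "weak_point ?Y (hocolim_le leP leX f) (p, x)"
      using contractible_below_fibre fibres \<open>x \<in> X p\<close> x p_in_P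
        down_hat_fibre_point[OF remove.prems x minimal]
      by (simp add: weak_point_def down_weak_point_def hocolim_set_def)
    have "E - {x} \<subseteq> X p"
      using remove.prems by blast
    then have "collapses (hocolim_le leP leX f)
        {z \<in> hocolim_set P X. fst z \<noteq> p \<or> snd z \<in> E - {x}} (hocolim_set (P - {p}) X)"
      by (rule remove.IH[OF x])
    moreover have "{z \<in> hocolim_set P X. fst z \<noteq> p \<or> snd z \<in> E - {x}} = ?Y - {(p, x)}"
      by auto
    ultimately have "collapses (hocolim_le leP leX f) (?Y - {(p, x)}) (hocolim_set (P - {p}) X)"
      by simp
    then show ?case
      by (rule collapses.step[OF weak])
  qed
qed

end

theorem proposition2p8:
  fixes P :: "'p set" and leP :: "'p \<Rightarrow> 'p \<Rightarrow> bool"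
    and X :: "'p \<Rightarrow> 'x set" and leX :: "'p \<Rightarrow> 'x \<Rightarrow> 'x \<Rightarrow> bool"
    and f :: "'p \<Rightarrow> 'p \<Rightarrow> 'x \<Rightarrow> 'x" and p q :: 'p
  assumes "finite_poset P leP"
    and "poset_diagram P leP X leX f"
    and "p \<in> P"
    and "is_max_of (down_hat P leP p) leP q"
    and "\<forall>x\<in>X p. contractible_fs (leX q) {y\<in>X q. leX p (f q p y) x}"
  shows "collapses (hocolim_le leP leX f) (hocolim_set P X) (hocolim_set (P - {p}) X)
       \<and> weak_equivalent (hocolim_set P X) (hocolim_le leP leX f)
                         (hocolim_set (P - {p}) X) (hocolim_le leP leX f)"
proof -
  have "{z \<in> hocolim_set P X. fst z \<noteq> p \<or> snd z \<in> X p} = hocolim_set P X"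
    by (auto simp: hocolim_set_def)
  then have collapse: "collapses (hocolim_le leP leX f) (hocolim_set P X) (hocolim_set (P - {p}) X)"
    using hocolim_collapses_fibre[OF assms subset_refl] by simp
  moreover have "weak_equivalent (hocolim_set P X) (hocolim_le leP leX f)
      (hocolim_set (P - {p}) X) (hocolim_le leP leX f)"
    unfolding weak_equivalent_def
    by (rule collapses_homotopy_equivalent[OF collapse finite_poset_hocolim[OF assms(1,2)]])
  ultimately show ?thesis ..
qed

end
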